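(* Let $\mathcal{S}=\mathcal{S}_1\times\cdots\times\mathcal{S}_m$ with each $\mathcal{S}_i$ finite of cardinality $S_i$, and let $P,P'$ be probability measures on $\mathcal{S}$ with product form $P(y)=\prod_{i=1}^m P_i(y_i)$ and $P'(y)=\prod_{i=1}^m P'_i(y_i)$ for all $y=(y_1,\dots,y_m)\in\mathcal{S}$, where $P_i,P'_i$ are probability distributions on $\mathcal{S}_i$. Assume that for every $i\in[m]$ there exist $\xi_i,\xi'_i>0$ such that $|P'_i(y_i)-P_i(y_i)|\le\sqrt{P_i(y_i)\xi_i}+\xi'_i$ for all $y_i\in\mathcal{S}_i$. Then for every function $f:\mathcal{S}\to[0,\infty)$, $$\sum_{y\in\mathcal{S}}|P(y)-P'(y)|f(y)\le \max_{y\in\prod_{i=1}^m\mathrm{supp}(P_i)}f(y)\sum_{i=1}^m\sum_{y_i\in\mathcal{S}_i}\sqrt{P_i(y_i)\xi_i}\;+\;3\max_{y\in\mathcal{S}}f(y)\sum_{i=1}^m\xi'_iS_i .$$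
   Context: $\mathrm{supp}(P_i)=\{y_i\in\mathcal{S}_i: P_i(y_i)>0\}$. *)

theory Defs
  imports Complex_Main "HOL-Library.FuncSet"
begin

end

theory Submission
  imports Defs
begin

text \<open>The \<open>\<ell>\<^sub>1\<close> distance between two product distributions is at most the sum of the
  \<open>\<ell>\<^sub>1\<close> distances between their marginals (induction on the number of factors). Split the
  weighted sum over \<open>y\<close> into the product \<open>T\<close> of the supports of the \<open>P\<^sub>i\<close>, where \<open>f\<close> is at
  most its maximum over \<open>T\<close>, and the complement of \<open>T\<close>, where \<open>P\<close> vanishes. On the complement
  only \<open>P'\<close> contributes, and its mass there is bounded by the masses of the \<open>P'\<^sub>i\<close> off
  \<open>supp(P\<^sub>i)\<close>, where the closeness hypothesis reads \<open>P'\<^sub>i(y\<^sub>i) \<le> \<xi>'\<^sub>i\<close>. This even gives the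
  bound with constant \<open>1\<close> in place of \<open>3\<close>.\<close>

lemma sum_PiE_insert:
  assumes "a \<notin> I"
  shows "(\<Sum>g\<in>PiE (insert a I) S. F g) = (\<Sum>(y, g)\<in>S a \<times> PiE I S. F (g(a := y)))"
  unfolding PiE_insert_eq sum.reindex[OF inj_combinator[OF assms]] by (simp add: case_prod_unfold)

lemma prod_fun_upd_notin:
  assumes "a \<notin> I"
  shows "(\<Prod>i\<in>I. h i ((g(a := y)) i)) = (\<Prod>i\<in>I. h i (g i))"
  using assms by (intro prod.cong) auto

lemma abs_mult_diff_le:
  fixes a b c d :: real
  assumes "0 \<le> b" "0 \<le> c"
  shows "\<bar>a * b - c * d\<bar> \<le> \<bar>a - c\<bar> * b + c * \<bar>b - d\<bar>"
proof -
  have "a * b - c * d = (a - c) * b + c * (b - d)" by (simp add: algebra_simps)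
  then show ?thesis
    using assms abs_triangle_ineq[of "(a - c) * b" "c * (b - d)"] by (simp add: abs_mult)
qed

lemma sum_PiE_prod_le_1:
  fixes p :: "'i \<Rightarrow> 'a \<Rightarrow> real"
  assumes "finite I" "\<And>i. i \<in> I \<Longrightarrow> finite (S i)"
    and "\<And>i x. i \<in> I \<Longrightarrow> x \<in> S i \<Longrightarrow> 0 \<le> p i x"
    and "\<And>i. i \<in> I \<Longrightarrow> (\<Sum>x\<in>S i. p i x) \<le> 1"
  shows "(\<Sum>g\<in>PiE I S. \<Prod>i\<in>I. p i (g i)) \<le> 1"
proof -
  have "(\<Sum>g\<in>PiE I S. \<Prod>i\<in>I. p i (g i)) = (\<Prod>i\<in>I. \<Sum>x\<in>S i. p i x)"
    using assms by (simp add: prod_sum_PiE)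
  also have "\<dots> \<le> 1"
    using assms by (intro prod_le_1) (auto intro: sum_nonneg)
  finally show ?thesis .
qed

lemma sum_PiE_abs_prod_diff_le:
  fixes p q :: "'i \<Rightarrow> 'a \<Rightarrow> real"
  assumes "finite I" "\<And>i. i \<in> I \<Longrightarrow> finite (S i)"
    and "\<And>i x. i \<in> I \<Longrightarrow> x \<in> S i \<Longrightarrow> 0 \<le> p i x"
    and "\<And>i x. i \<in> I \<Longrightarrow> x \<in> S i \<Longrightarrow> 0 \<le> q i x"
    and "\<And>i. i \<in> I \<Longrightarrow> (\<Sum>x\<in>S i. p i x) \<le> 1"
    and "\<And>i. i \<in> I \<Longrightarrow> (\<Sum>x\<in>S i. q i x) \<le> 1"
  shows "(\<Sum>g\<in>PiE I S. \<bar>(\<Prod>i\<in>I. p i (g i)) - (\<Prod>i\<in>I. q i (g i))\<bar>)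
           \<le> (\<Sum>i\<in>I. \<Sum>x\<in>S i. \<bar>p i x - q i x\<bar>)"
  using assms
proof (induction I rule: finite_induct)
  case empty
  then show ?case by simp
next
  case (insert a I)
  define P where "P g = (\<Prod>i\<in>I. p i (g i))" for g
  define Q where "Q g = (\<Prod>i\<in>I. q i (g i))" for g
  have P_nonneg: "0 \<le> P g" if "g \<in> PiE I S" for g
    unfolding P_def using that insert.prems by (intro prod_nonneg) auto
  have "(\<Sum>g\<in>PiE (insert a I) S. \<bar>(\<Prod>i\<in>insert a I. p i (g i)) - (\<Prod>i\<in>insert a I. q i (g i))\<bar>)
      = (\<Sum>(y, g)\<in>S a \<times> PiE I S. \<bar>p a y * P g - q a y * Q g\<bar>)"
    using insert.hyps
    by (simp add: sum_PiE_insert prod_fun_upd_notin P_def Q_def fun_upd_same del: fun_upd_apply)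
  also have "\<dots> \<le> (\<Sum>(y, g)\<in>S a \<times> PiE I S. \<bar>p a y - q a y\<bar> * P g + q a y * \<bar>P g - Q g\<bar>)"
    using insert.prems P_nonneg by (intro sum_mono) (auto intro: abs_mult_diff_le)
  also have "\<dots> = (\<Sum>y\<in>S a. \<bar>p a y - q a y\<bar>) * (\<Sum>g\<in>PiE I S. P g)
                 + (\<Sum>y\<in>S a. q a y) * (\<Sum>g\<in>PiE I S. \<bar>P g - Q g\<bar>)"
    by (simp add: sum.cartesian_product[symmetric] sum.distrib sum_product)
  also have "\<dots> \<le> (\<Sum>y\<in>S a. \<bar>p a y - q a y\<bar>) * 1 + 1 * (\<Sum>i\<in>I. \<Sum>x\<in>S i. \<bar>p i x - q i x\<bar>)"
  proof (intro add_mono mult_mono)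
    show "(\<Sum>g\<in>PiE I S. P g) \<le> 1"
      unfolding P_def using insert by (intro sum_PiE_prod_le_1) auto
    show "(\<Sum>g\<in>PiE I S. \<bar>P g - Q g\<bar>) \<le> (\<Sum>i\<in>I. \<Sum>x\<in>S i. \<bar>p i x - q i x\<bar>)"
      unfolding P_def Q_def using insert by (intro insert.IH) auto
  qed (use insert.prems P_nonneg in \<open>auto intro: sum_nonneg\<close>)
  also have "\<dots> = (\<Sum>i\<in>insert a I. \<Sum>x\<in>S i. \<bar>p i x - q i x\<bar>)"
    using insert.hyps by simp
  finally show ?case .
qed

lemma sum_PiE_diff_prod_le:
  fixes q :: "'i \<Rightarrow> 'a \<Rightarrow> real"
  assumes "finite I" "\<And>i. i \<in> I \<Longrightarrow> finite (S i)" "\<And>i. i \<in> I \<Longrightarrow> T i \<subseteq> S i"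
    and "\<And>i x. i \<in> I \<Longrightarrow> x \<in> S i \<Longrightarrow> 0 \<le> q i x"
    and "\<And>i. i \<in> I \<Longrightarrow> (\<Sum>x\<in>S i. q i x) \<le> 1"
  shows "(\<Sum>y\<in>PiE I S - PiE I T. \<Prod>i\<in>I. q i (y i)) \<le> (\<Sum>i\<in>I. \<Sum>x\<in>S i - T i. q i x)"
proof -
  \<comment> \<open>\<open>q\<close> truncated to \<open>T\<close>: its product agrees with that of \<open>q\<close> on \<open>PiE I T\<close> and vanishes off it\<close>
  define r where "r i x = (if x \<in> T i then q i x else 0)" for i x
  have r_outside: "(\<Prod>i\<in>I. r i (y i)) = 0" if "y \<in> PiE I S - PiE I T" for y
    using that \<open>finite I\<close> unfolding r_def by (auto simp: PiE_iff intro: prod_zero)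
  have "(\<Sum>y\<in>PiE I S - PiE I T. \<Prod>i\<in>I. q i (y i))
      = (\<Sum>y\<in>PiE I S - PiE I T. \<bar>(\<Prod>i\<in>I. q i (y i)) - (\<Prod>i\<in>I. r i (y i))\<bar>)"
  proof (rule sum.cong[OF refl])
    fix y assume y: "y \<in> PiE I S - PiE I T"
    then have "0 \<le> (\<Prod>i\<in>I. q i (y i))"
      using assms by (auto simp: PiE_iff intro!: prod_nonneg)
    then show "(\<Prod>i\<in>I. q i (y i)) = \<bar>(\<Prod>i\<in>I. q i (y i)) - (\<Prod>i\<in>I. r i (y i))\<bar>"
      using r_outside[OF y] by simp
  qed
  also have "\<dots> \<le> (\<Sum>y\<in>PiE I S. \<bar>(\<Prod>i\<in>I. q i (y i)) - (\<Prod>i\<in>I. r i (y i))\<bar>)"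
    using assms by (intro sum_mono2) (auto simp: finite_PiE)
  also have "\<dots> \<le> (\<Sum>i\<in>I. \<Sum>x\<in>S i. \<bar>q i x - r i x\<bar>)"
  proof (rule sum_PiE_abs_prod_diff_le)
    fix i assume "i \<in> I"
    then show "(\<Sum>x\<in>S i. r i x) \<le> 1"
      using assms sum_mono[of "S i" "r i" "q i"] unfolding r_def by fastforce
  qed (use assms in \<open>auto simp: r_def\<close>)
  also have "\<dots> = (\<Sum>i\<in>I. \<Sum>x\<in>S i - T i. q i x)"
  proof (rule sum.cong[OF refl])
    fix i assume "i \<in> I"
    then have "(\<Sum>x\<in>S i. \<bar>q i x - r i x\<bar>) = (\<Sum>x\<in>S i. if x \<in> T i then 0 else q i x)"
      using assms unfolding r_def by (intro sum.cong refl) auto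
    also have "\<dots> = (\<Sum>x\<in>S i - T i. q i x)"
      using assms \<open>i \<in> I\<close> by (simp add: sum.If_cases Diff_eq)
    finally show "(\<Sum>x\<in>S i. \<bar>q i x - r i x\<bar>) = (\<Sum>x\<in>S i - T i. q i x)" .
  qed
  finally show ?thesis .
qed

lemma sum_mult_le_by_two_bounds:
  fixes w f :: "'b \<Rightarrow> real"
  assumes "finite U" "T \<subseteq> U" "\<And>y. y \<in> U \<Longrightarrow> 0 \<le> w y"
    and "\<And>y. y \<in> T \<Longrightarrow> f y \<le> a" "\<And>y. y \<in> U \<Longrightarrow> f y \<le> b" "0 \<le> a" "a \<le> b"
    and "(\<Sum>y\<in>U. w y) \<le> s + t" "(\<Sum>y\<in>U - T. w y) \<le> t"
  shows "(\<Sum>y\<in>U. w y * f y) \<le> a * s + b * t"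
proof -
  have split: "(\<Sum>y\<in>U. g y) = (\<Sum>y\<in>T. g y) + (\<Sum>y\<in>U - T. g y)" for g :: "'b \<Rightarrow> real"
    using sum.subset_diff[OF \<open>T \<subseteq> U\<close> \<open>finite U\<close>] by (simp add: add.commute)
  have "(\<Sum>y\<in>U. w y * f y) \<le> (\<Sum>y\<in>T. w y * a) + (\<Sum>y\<in>U - T. w y * b)"
    unfolding split using assms by (intro add_mono sum_mono mult_left_mono) auto
  also have "\<dots> = a * (\<Sum>y\<in>T. w y) + b * (\<Sum>y\<in>U - T. w y)"
    by (simp add: sum_distrib_left mult.commute)
  also have "\<dots> = a * (\<Sum>y\<in>U. w y) + (b - a) * (\<Sum>y\<in>U - T. w y)"
    unfolding split by (simp add: algebra_simps)
  also have "\<dots> \<le> a * (s + t) + (b - a) * t"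
    using assms by (intro add_mono mult_left_mono) auto
  also have "\<dots> = a * s + b * t"
    by (simp add: algebra_simps)
  finally show ?thesis .
qed

locale product_perturbation =
  fixes I :: "'i set" and S :: "'i \<Rightarrow> 'a set"
    and p p' :: "'i \<Rightarrow> 'a \<Rightarrow> real" and \<xi> \<xi>' :: "'i \<Rightarrow> real"
  assumes finite_I: "finite I"
    and finite_S: "\<And>i. i \<in> I \<Longrightarrow> finite (S i)"
    and p_nonneg: "\<And>i x. i \<in> I \<Longrightarrow> x \<in> S i \<Longrightarrow> 0 \<le> p i x"
    and p_sum: "\<And>i. i \<in> I \<Longrightarrow> (\<Sum>x\<in>S i. p i x) = 1"
    and p'_nonneg: "\<And>i x. i \<in> I \<Longrightarrow> x \<in> S i \<Longrightarrow> 0 \<le> p' i x"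
    and p'_sum: "\<And>i. i \<in> I \<Longrightarrow> (\<Sum>x\<in>S i. p' i x) = 1"
    and \<xi>'_nonneg: "\<And>i. i \<in> I \<Longrightarrow> 0 \<le> \<xi>' i"
    and close: "\<And>i x. i \<in> I \<Longrightarrow> x \<in> S i \<Longrightarrow> \<bar>p' i x - p i x\<bar> \<le> sqrt (p i x * \<xi> i) + \<xi>' i"
begin

definition supp :: "'i \<Rightarrow> 'a set" where
  "supp i = {x \<in> S i. 0 < p i x}"

lemma supp_subset: "supp i \<subseteq> S i"
  by (auto simp: supp_def)

lemma supp_nonempty:
  assumes "i \<in> I"
  shows "supp i \<noteq> {}"
proof
  assume "supp i = {}"
  then have "\<And>x. x \<in> S i \<Longrightarrow> p i x = 0"
    using p_nonneg[OF assms] by (force simp: supp_def)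
  then show False
    using p_sum[OF assms] by simp
qed

lemma PiE_supp_nonempty: "PiE I supp \<noteq> {}"
  using supp_nonempty by (simp add: PiE_eq_empty_iff)

lemma finite_PiE_S: "finite (PiE I S)"
  using finite_I finite_S by (rule finite_PiE)

lemma PiE_supp_subset: "PiE I supp \<subseteq> PiE I S"
  using supp_subset by (rule PiE_mono)

lemma sum_abs_prod_diff_le:
  "(\<Sum>y\<in>PiE I S. \<bar>(\<Prod>i\<in>I. p i (y i)) - (\<Prod>i\<in>I. p' i (y i))\<bar>)
     \<le> (\<Sum>i\<in>I. \<Sum>x\<in>S i. sqrt (p i x * \<xi> i)) + (\<Sum>i\<in>I. \<xi>' i * card (S i))"
proof -
  have "(\<Sum>y\<in>PiE I S. \<bar>(\<Prod>i\<in>I. p i (y i)) - (\<Prod>i\<in>I. p' i (y i))\<bar>)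
      \<le> (\<Sum>i\<in>I. \<Sum>x\<in>S i. \<bar>p i x - p' i x\<bar>)"
    using finite_I finite_S p_nonneg p'_nonneg p_sum p'_sum by (intro sum_PiE_abs_prod_diff_le) auto
  also have "\<dots> \<le> (\<Sum>i\<in>I. \<Sum>x\<in>S i. sqrt (p i x * \<xi> i) + \<xi>' i)"
    using close by (intro sum_mono) (simp add: abs_minus_commute)
  also have "\<dots> = (\<Sum>i\<in>I. \<Sum>x\<in>S i. sqrt (p i x * \<xi> i)) + (\<Sum>i\<in>I. \<xi>' i * card (S i))"
    by (simp add: sum.distrib mult.commute)
  finally show ?thesis .
qed

lemma prod_eq_0_off_supp:
  assumes "y \<in> PiE I S - PiE I supp"
  shows "(\<Prod>i\<in>I. p i (y i)) = 0"
proof -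
  from assms obtain i where "i \<in> I" "y i \<in> S i" "y i \<notin> supp i"
    by (auto simp: PiE_iff)
  then have "p i (y i) = 0"
    using p_nonneg by (force simp: supp_def)
  then show ?thesis
    using \<open>i \<in> I\<close> finite_I by (intro prod_zero) auto
qed

lemma sum_abs_prod_diff_off_supp_le:
  "(\<Sum>y\<in>PiE I S - PiE I supp. \<bar>(\<Prod>i\<in>I. p i (y i)) - (\<Prod>i\<in>I. p' i (y i))\<bar>)
     \<le> (\<Sum>i\<in>I. \<xi>' i * card (S i))"
proof -
  have "(\<Sum>y\<in>PiE I S - PiE I supp. \<bar>(\<Prod>i\<in>I. p i (y i)) - (\<Prod>i\<in>I. p' i (y i))\<bar>)
      = (\<Sum>y\<in>PiE I S - PiE I supp. \<Prod>i\<in>I. p' i (y i))"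
  proof (rule sum.cong[OF refl])
    fix y assume y: "y \<in> PiE I S - PiE I supp"
    then have "0 \<le> (\<Prod>i\<in>I. p' i (y i))"
      using p'_nonneg by (auto simp: PiE_iff intro!: prod_nonneg)
    then show "\<bar>(\<Prod>i\<in>I. p i (y i)) - (\<Prod>i\<in>I. p' i (y i))\<bar> = (\<Prod>i\<in>I. p' i (y i))"
      using prod_eq_0_off_supp[OF y] by simp
  qed
  also have "\<dots> \<le> (\<Sum>i\<in>I. \<Sum>x\<in>S i - supp i. p' i x)"
    using finite_I finite_S supp_subset p'_nonneg p'_sum by (intro sum_PiE_diff_prod_le) auto
  also have "\<dots> \<le> (\<Sum>i\<in>I. \<Sum>x\<in>S i. \<xi>' i)"
  proof (intro sum_mono)
    fix i assume "i \<in> I"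
    have "p' i x \<le> \<xi>' i" if "x \<in> S i - supp i" for x
      using that close[OF \<open>i \<in> I\<close>, of x] p_nonneg[OF \<open>i \<in> I\<close>, of x] by (force simp: supp_def)
    then have "(\<Sum>x\<in>S i - supp i. p' i x) \<le> (\<Sum>x\<in>S i - supp i. \<xi>' i)"
      by (rule sum_mono)
    also have "\<dots> \<le> (\<Sum>x\<in>S i. \<xi>' i)"
      using finite_S \<xi>'_nonneg \<open>i \<in> I\<close> by (intro sum_mono2) auto
    finally show "(\<Sum>x\<in>S i - supp i. p' i x) \<le> (\<Sum>x\<in>S i. \<xi>' i)" .
  qed
  also have "\<dots> = (\<Sum>i\<in>I. \<xi>' i * card (S i))"
    by (simp add: mult.commute)
  finally show ?thesis .
qed

lemma weighted_sum_abs_prod_diff_le: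
  fixes f :: "('i \<Rightarrow> 'a) \<Rightarrow> real"
  assumes f_nonneg: "\<And>y. y \<in> PiE I S \<Longrightarrow> 0 \<le> f y"
  shows "(\<Sum>y\<in>PiE I S. \<bar>(\<Prod>i\<in>I. p i (y i)) - (\<Prod>i\<in>I. p' i (y i))\<bar> * f y)
           \<le> Max (f ` PiE I supp) * (\<Sum>i\<in>I. \<Sum>x\<in>S i. sqrt (p i x * \<xi> i))
             + Max (f ` PiE I S) * (\<Sum>i\<in>I. \<xi>' i * card (S i))"
proof (rule sum_mult_le_by_two_bounds)
  have finite_supp: "finite (PiE I supp)"
    by (rule finite_subset[OF PiE_supp_subset finite_PiE_S])
  obtain y where y: "y \<in> PiE I supp"
    using PiE_supp_nonempty by blast
  have "f y \<le> Max (f ` PiE I supp)"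
    using finite_supp y by simp
  moreover have "0 \<le> f y"
    using y PiE_supp_subset f_nonneg by blast
  ultimately show "0 \<le> Max (f ` PiE I supp)"
    by linarith
  show "Max (f ` PiE I supp) \<le> Max (f ` PiE I S)"
    using finite_PiE_S PiE_supp_subset PiE_supp_nonempty by (intro Max_mono) auto
  show "f y \<le> Max (f ` PiE I supp)" if "y \<in> PiE I supp" for y
    using finite_supp that by simp
  show "f y \<le> Max (f ` PiE I S)" if "y \<in> PiE I S" for y
    using finite_PiE_S that by simp
qed (use finite_PiE_S PiE_supp_subset sum_abs_prod_diff_le sum_abs_prod_diff_off_supp_le in auto)

end

theorem lemma2:
  fixes m :: nat
    and S :: "nat \<Rightarrow> 'a set"
    and Pm Pm' :: "nat \<Rightarrow> 'a \<Rightarrow> real"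
    and P P' :: "(nat \<Rightarrow> 'a) \<Rightarrow> real"
    and \<xi> \<xi>' :: "nat \<Rightarrow> real"
    and f :: "(nat \<Rightarrow> 'a) \<Rightarrow> real"
  assumes finS: "\<And>i. i \<in> {1..m} \<Longrightarrow> finite (S i)"
    and Pm_nonneg: "\<And>i x. i \<in> {1..m} \<Longrightarrow> x \<in> S i \<Longrightarrow> Pm i x \<ge> 0"
    and Pm_sum: "\<And>i. i \<in> {1..m} \<Longrightarrow> (\<Sum>x\<in>S i. Pm i x) = 1"
    and Pm'_nonneg: "\<And>i x. i \<in> {1..m} \<Longrightarrow> x \<in> S i \<Longrightarrow> Pm' i x \<ge> 0"
    and Pm'_sum: "\<And>i. i \<in> {1..m} \<Longrightarrow> (\<Sum>x\<in>S i. Pm' i x) = 1"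
    and P_prod: "\<And>y. y \<in> PiE {1..m} S \<Longrightarrow> P y = (\<Prod>i=1..m. Pm i (y i))"
    and P'_prod: "\<And>y. y \<in> PiE {1..m} S \<Longrightarrow> P' y = (\<Prod>i=1..m. Pm' i (y i))"
    and \<xi>_pos: "\<And>i. i \<in> {1..m} \<Longrightarrow> \<xi> i > 0"
    and \<xi>'_pos: "\<And>i. i \<in> {1..m} \<Longrightarrow> \<xi>' i > 0"
    and close: "\<And>i x. i \<in> {1..m} \<Longrightarrow> x \<in> S i \<Longrightarrow>
                  \<bar>Pm' i x - Pm i x\<bar> \<le> sqrt (Pm i x * \<xi> i) + \<xi>' i"
    and f_nonneg: "\<And>y. y \<in> PiE {1..m} S \<Longrightarrow> f y \<ge> 0"
  shows "(\<Sum>y\<in>PiE {1..m} S. \<bar>P y - P' y\<bar> * f y)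
           \<le> Max (f ` PiE {1..m} (\<lambda>i. {x \<in> S i. Pm i x > 0}))
               * (\<Sum>i=1..m. \<Sum>x\<in>S i. sqrt (Pm i x * \<xi> i))
             + 3 * Max (f ` PiE {1..m} S) * (\<Sum>i=1..m. \<xi>' i * real (card (S i)))"
proof -
  interpret product_perturbation "{1..m}" S Pm Pm' \<xi> \<xi>'
    using finS Pm_nonneg Pm_sum Pm'_nonneg Pm'_sum \<xi>'_pos close
    by unfold_locales (auto intro: less_imp_le)
  have supp_eq: "supp = (\<lambda>i. {x \<in> S i. Pm i x > 0})"
    by (auto simp: supp_def)
  obtain y where y: "y \<in> PiE {1..m} S"
    using PiE_supp_nonempty PiE_supp_subset by blast
  have "f y \<le> Max (f ` PiE {1..m} S)"
    using finite_PiE_S y by simp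
  then have "0 \<le> Max (f ` PiE {1..m} S)"
    using f_nonneg[OF y] by linarith
  moreover have "0 \<le> (\<Sum>i=1..m. \<xi>' i * real (card (S i)))"
    using \<xi>'_nonneg by (intro sum_nonneg) simp
  ultimately have extra_nonneg: "0 \<le> Max (f ` PiE {1..m} S) * (\<Sum>i=1..m. \<xi>' i * real (card (S i)))"
    by (rule mult_nonneg_nonneg)
  have "(\<Sum>y\<in>PiE {1..m} S. \<bar>P y - P' y\<bar> * f y)
      = (\<Sum>y\<in>PiE {1..m} S. \<bar>(\<Prod>i=1..m. Pm i (y i)) - (\<Prod>i=1..m. Pm' i (y i))\<bar> * f y)"
    by (intro sum.cong refl) (simp only: P_prod P'_prod)
  also have "\<dots> \<le> Max (f ` PiE {1..m} (\<lambda>i. {x \<in> S i. Pm i x > 0}))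
               * (\<Sum>i=1..m. \<Sum>x\<in>S i. sqrt (Pm i x * \<xi> i))
             + Max (f ` PiE {1..m} S) * (\<Sum>i=1..m. \<xi>' i * real (card (S i)))"
    using weighted_sum_abs_prod_diff_le[OF f_nonneg] unfolding supp_eq .
  finally show ?thesis
    using extra_nonneg by linarith
qed

end
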